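(* Let $k \in \mathbb{N}$, and let $a(0) \leqslant a(1)\leqslant \ldots \leqslant a(k)$ be positive integers. Let $c$ be the largest real root of the polynomial equation $x^{k+1} = \sum_{i = 0}^k a(i)x^i$. Then there exists a hereditary property of ordered graphs $\mathcal{P}$ with $|\mathcal{P}_n| = c^{(1+o(1))n}$ as $n\to\infty$.
   Context: An ordered graph of order $n$ is a graph on vertex set $[n]$ with the natural order. A hereditary property of ordered graphs is a collection of ordered graphs closed under order-preserving isomorphism and under taking induced ordered subgraphs (subgraphs induced via injective order-preserving maps preserving adjacency and non-adjacency). $\mathcal{P}_n$ denotes the set of members of $\mathcal{P}$ with vertex set $[n]$. *)

theory Defs
  imports Complex_Main
begin

text \<open>An ordered graph of order n: vertex set {0..<n} (standing for [n]) with the natural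
order; edges are stored as pairs (i,j) with i < j < n.\<close>
type_synonym ograph = "nat \<times> (nat \<times> nat) set"

definition ordered_graph :: "ograph \<Rightarrow> bool" where
  "ordered_graph G \<longleftrightarrow> snd G \<subseteq> {(i,j). i < j \<and> j < fst G}"

definition induced_ordered_subgraph :: "ograph \<Rightarrow> ograph \<Rightarrow> bool" where
  "induced_ordered_subgraph H G \<longleftrightarrow>
     (\<exists>f. strict_mono_on {0..<fst H} f \<and> f ` {0..<fst H} \<subseteq> {0..<fst G} \<and>
          (\<forall>i j. i < j \<and> j < fst H \<longrightarrow> ((i,j) \<in> snd H \<longleftrightarrow> (f i, f j) \<in> snd G)))"

text \<open>Hereditary property. Since every ordered graph of order n is on the canonical vertex
set with the natural order, closure under order-preserving isomorphism is automatic.\<close>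
definition hereditary_property :: "ograph set \<Rightarrow> bool" where
  "hereditary_property P \<longleftrightarrow>
     (\<forall>G\<in>P. ordered_graph G) \<and>
     (\<forall>G\<in>P. \<forall>H. ordered_graph H \<and> induced_ordered_subgraph H G \<longrightarrow> H \<in> P)"

definition slice :: "ograph set \<Rightarrow> nat \<Rightarrow> ograph set" where
  "slice P n = {G \<in> P. fst G = n}"

end

(*
  The property consists of the graphs of admissible words. Such a word is a sequence of
  blocks, a block being a run of L <= k+1 consecutive vertices sharing a value
  s in {1..a(k+1-L)}; vertices i < j are adjacent iff they lie in the same block or the
  value of i is smaller than the value of j. Deleting vertices only shrinks blocks and, a
  being monotone, keeps the value constraint, so the property is hereditary.

  Every graph of order n comes from a decomposition of n into blocks, so |P_n| <= N(n),
  the number of such decompositions. N satisfies N(n) = sum_L a(k+1-L) N(n-L), whose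
  characteristic equation is x^(k+1) = sum_i a(i) x^i, whence c^(n-k) <= N(n) <= c^n.
  Conversely, prefixing a staircase of a(k) singleton blocks with values 1..a(k) makes the
  decomposition recoverable from the graph: the value of any later vertex is one more than
  its number of staircase neighbours. Hence N(n) <= |P_(n+a(k))|, and |P_n| = c^((1+o(1))n).
*)

theory Submission
  imports Defs "HOL-Library.Sublist"
begin

section \<open>Linear recurrences and growth rates\<close>

lemma power_diff_swap:
  fixes c :: "'a::comm_monoid_mult"
  assumes "L \<le> n" "L \<le> m"
  shows "c ^ m * c ^ (n - L) = c ^ n * c ^ (m - L)"
proof -
  have "m + (n - L) = n + (m - L)" using assms by simp
  then show ?thesis by (metis power_add)
qed

lemma linear_recurrence_le_power:
  fixes N b :: "nat \<Rightarrow> real"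
  assumes c: "0 < c" and b: "\<And>L. 0 \<le> b L" and N0: "N 0 \<le> 1"
    and rec: "\<And>n. 0 < n \<Longrightarrow> N n = (\<Sum>L=1..min n m. b L * N (n - L))"
    and char: "(\<Sum>L=1..m. b L * c ^ (m - L)) = c ^ m"
  shows "N n \<le> c ^ n"
proof (induction n rule: less_induct)
  case (less n)
  show ?case
  proof (cases "n = 0")
    case True
    then show ?thesis using N0 by simp
  next
    case False
    then have n: "0 < n" by simp
    have "N n \<le> (\<Sum>L=1..min n m. b L * c ^ (n - L))"
      unfolding rec[OF n] using b by (intro sum_mono mult_left_mono less.IH) auto
    then have "c ^ m * N n \<le> c ^ m * (\<Sum>L=1..min n m. b L * c ^ (n - L))"
      using c by (simp add: mult_left_mono)
    also have "\<dots> = c ^ n * (\<Sum>L=1..min n m. b L * c ^ (m - L))"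
      unfolding sum_distrib_left by (intro sum.cong) (auto simp: power_diff_swap mult.left_commute)
    also have "\<dots> \<le> c ^ n * (\<Sum>L=1..m. b L * c ^ (m - L))"
      using b c by (intro mult_left_mono sum_mono2) auto
    also have "\<dots> = c ^ m * c ^ n"
      unfolding char by (simp add: mult.commute)
    finally show ?thesis using c by simp
  qed
qed

lemma power_le_linear_recurrence:
  fixes N b :: "nat \<Rightarrow> real"
  assumes c: "1 \<le> c" and b: "\<And>L. 0 \<le> b L" and N1: "\<And>n. 1 \<le> N n"
    and rec: "\<And>n. 0 < n \<Longrightarrow> N n = (\<Sum>L=1..min n m. b L * N (n - L))"
    and char: "(\<Sum>L=1..m. b L * c ^ (m - L)) = c ^ m"
  shows "c ^ n \<le> c ^ (m - 1) * N n"
proof (induction n rule: less_induct)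
  case (less n)
  show ?case
  proof (cases "n < m \<or> n = 0")
    case True
    then have "c ^ n \<le> c ^ (m - 1)" using c by (intro power_increasing) auto
    also have "\<dots> \<le> c ^ (m - 1) * N n" using c N1[of n] by simp
    finally show ?thesis .
  next
    case False
    then have "0 < n" "min n m = m" by auto
    have "c ^ m * (\<Sum>L=1..m. b L * c ^ (n - L)) = c ^ n * (\<Sum>L=1..m. b L * c ^ (m - L))"
      unfolding sum_distrib_left using False
      by (intro sum.cong) (auto simp: power_diff_swap mult.left_commute)
    also have "\<dots> = c ^ m * c ^ n"
      unfolding char by (simp add: mult.commute)
    finally have "c ^ n = (\<Sum>L=1..m. b L * c ^ (n - L))"
      using c by simp
    also have "\<dots> \<le> (\<Sum>L=1..m. b L * (c ^ (m - 1) * N (n - L)))"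
      using b \<open>0 < n\<close> by (intro sum_mono mult_left_mono less.IH) auto
    also have "\<dots> = c ^ (m - 1) * N n"
      using rec[OF \<open>0 < n\<close>] \<open>min n m = m\<close> by (simp add: sum_distrib_left mult.left_commute)
    finally show ?thesis .
  qed
qed

lemma largest_root_ge_1:
  fixes b :: "nat \<Rightarrow> real"
  assumes b: "\<And>i. i \<le> k \<Longrightarrow> 0 \<le> b i" and sum_b: "1 \<le> (\<Sum>i\<le>k. b i)"
    and largest: "\<forall>x. x ^ (k + 1) = (\<Sum>i\<le>k. b i * x ^ i) \<longrightarrow> x \<le> c"
  shows "1 \<le> c"
proof -
  define p where "p x = x ^ (k + 1) - (\<Sum>i\<le>k. b i * x ^ i)" for x :: real
  define X where "X = 1 + (\<Sum>i\<le>k. b i)"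
  have "X \<ge> 1" using sum_b by (simp add: X_def)
  have "(\<Sum>i\<le>k. b i * X ^ i) \<le> (\<Sum>i\<le>k. b i * X ^ k)"
    using b \<open>X \<ge> 1\<close> by (intro sum_mono mult_left_mono power_increasing) auto
  also have "\<dots> = (X - 1) * X ^ k" by (simp add: X_def sum_distrib_right)
  also have "\<dots> \<le> X ^ (k + 1)" using \<open>X \<ge> 1\<close> by (simp add: algebra_simps)
  finally have "0 \<le> p X" by (simp add: p_def)
  moreover have "p 1 \<le> 0" using sum_b by (simp add: p_def)
  moreover have "continuous_on {1..X} p" unfolding p_def by (intro continuous_intros)
  ultimately obtain x where "1 \<le> x" "p x = 0"
    using IVT'[of p 1 0 X] \<open>X \<ge> 1\<close> by auto
  then show ?thesis using largest by (auto simp: p_def)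
qed

text \<open>For \<open>c = 1\<close> the bounds force \<open>N n = 1\<close> only because \<open>N\<close> is integer-valued.\<close>

lemma exponential_growth_rate:
  fixes N :: "nat \<Rightarrow> nat" and c C :: real
  assumes c: "1 \<le> c" and C: "0 < C"
    and bounds: "\<forall>\<^sub>F n in sequentially. real (N n) \<le> c ^ n \<and> c ^ n \<le> C * real (N n)"
  shows "\<exists>\<epsilon>. \<epsilon> \<longlonglongrightarrow> 0 \<and>
    (\<forall>\<^sub>F n in sequentially. real (N n) = c powr ((1 + \<epsilon> n) * real n))"
proof (cases "c = 1")
  case True
  have "\<forall>\<^sub>F n in sequentially. real (N n) = c powr ((1 + 0) * real n)"
    using bounds by eventually_elim (use True C in \<open>auto simp: le_Suc_eq\<close>)
  then show ?thesis by (intro exI[of _ "\<lambda>_. 0"]) simp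
next
  case False
  then have c: "1 < c" using c by simp
  define \<epsilon> where "\<epsilon> n = log c (N n) / real n - 1" for n
  have bounds': "\<forall>\<^sub>F n in sequentially.
      0 < n \<and> 0 < N n \<and> real (N n) \<le> c ^ n \<and> c ^ n \<le> C * real (N n)"
    using bounds eventually_gt_at_top[of 0]
  proof eventually_elim
    case (elim n)
    moreover have "0 < c ^ n" using c by simp
    ultimately show ?case by (auto intro: gr0I)
  qed
  have powr_eq: "\<forall>\<^sub>F n in sequentially. real (N n) = c powr ((1 + \<epsilon> n) * real n)"
    using bounds' by eventually_elim (use c in \<open>simp add: \<epsilon>_def\<close>)
  have "\<forall>\<^sub>F n in sequentially. \<epsilon> n \<le> 0"
    using bounds'
  proof eventually_elim
    case (elim n)
    then have "log c (N n) \<le> log c (c ^ n)" using c by (subst log_le_cancel_iff) auto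
    then show ?case using c elim by (simp add: \<epsilon>_def divide_le_eq)
  qed
  moreover have "\<forall>\<^sub>F n in sequentially. - log c C / real n \<le> \<epsilon> n"
    using bounds'
  proof eventually_elim
    case (elim n)
    then have "log c (c ^ n) \<le> log c (C * N n)" using c C by (subst log_le_cancel_iff) auto
    then have "real n \<le> log c C + log c (N n)" using c C elim by (simp add: log_mult_pos)
    then show ?case using elim by (simp add: \<epsilon>_def field_simps)
  qed
  ultimately have "\<epsilon> \<longlonglongrightarrow> 0"
    using tendsto_sandwich[OF _ _ lim_const_over_n tendsto_const] by blast
  with powr_eq show ?thesis by blast
qed

lemma subseq_map_nth:
  assumes "strict_mono_on {0..<n} f" "f ` {0..<n} \<subseteq> {0..<length xs}"
  shows "subseq (map (\<lambda>i. xs ! f i) [0..<n]) xs"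
proof -
  have "sorted_wrt (<) (map f [0..<n])"
    using assms(1) by (auto simp: sorted_wrt_iff_nth_less strict_mono_on_def)
  then have "subseq (map f [0..<n]) [0..<length xs]"
    using assms(2) by (intro sorted_subset_imp_subseq) auto
  then have "subseq (map (nth xs) (map f [0..<n])) (map (nth xs) [0..<length xs])"
    by (rule subseq_map)
  then show ?thesis by (simp add: map_nth comp_def)
qed

lemma sorted_antimono_subseq: "subseq xs ys \<Longrightarrow> sorted ys \<Longrightarrow> sorted xs"
  by (auto simp: subseq_conv_nths sorted_nths)

lemma set_mono_subseq: "subseq xs ys \<Longrightarrow> set xs \<subseteq> set ys"
  by (auto simp: subseq_conv_nths dest: set_nths_subset[THEN subsetD])

lemma count_list_mono_subseq: "subseq xs ys \<Longrightarrow> count_list xs x \<le> count_list ys x"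
  by (metis count_list_eq_length_filter list_emb_length subseq_filter)

section \<open>Admissible words and their graphs\<close>

text \<open>A letter \<open>(s, l)\<close> is a vertex of value \<open>s\<close> in the block labelled \<open>l\<close>.\<close>

type_synonym word = "(nat \<times> nat) list"

definition word_graph :: "word \<Rightarrow> ograph" where
  "word_graph w = (length w, {(i, j). i < j \<and> j < length w \<and>
     (snd (w ! i) = snd (w ! j) \<or> fst (w ! i) < fst (w ! j))})"

text \<open>Allowing \<open>a (k + 1 - L)\<close> values for a block of length \<open>L\<close> makes the number of block
  decompositions satisfy the recurrence whose characteristic equation is
  \<open>x ^ (k + 1) = (\<Sum>i\<le>k. a i * x ^ i)\<close>.\<close>

definition blocks :: "nat \<Rightarrow> (nat \<Rightarrow> nat) \<Rightarrow> (nat \<times> nat) set" where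
  "blocks k a = (SIGMA L:{1..k+1}. {1..a (k + 1 - L)})"

text \<open>Sorted labels make the blocks contiguous, and since a label determines its letter,
  \<open>count_list w x\<close> is the size of the block of \<open>x\<close>.\<close>

definition admissible_word :: "nat \<Rightarrow> (nat \<Rightarrow> nat) \<Rightarrow> word \<Rightarrow> bool" where
  "admissible_word k a w \<longleftrightarrow> sorted (map snd w) \<and> inj_on snd (set w) \<and>
     (\<forall>x\<in>set w. (count_list w x, fst x) \<in> blocks k a)"

definition admissible_graphs :: "nat \<Rightarrow> (nat \<Rightarrow> nat) \<Rightarrow> ograph set" where
  "admissible_graphs k a = word_graph ` {w. admissible_word k a w}"

lemma blocks_shrink:
  assumes "mono_on {..k} a" "(L, s) \<in> blocks k a" "0 < L'" "L' \<le> L"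
  shows "(L', s) \<in> blocks k a"
proof -
  have "a (k + 1 - L) \<le> a (k + 1 - L')"
    using assms by (intro mono_onD[OF assms(1)]) (auto simp: blocks_def)
  then show ?thesis using assms by (auto simp: blocks_def)
qed

lemma blocks_value_le:
  assumes "mono_on {..k} a" "(L, s) \<in> blocks k a"
  shows "s \<le> a k"
  using assms(2) blocks_shrink[OF assms, of 1] by (auto simp: blocks_def)

lemma admissible_word_subseq:
  assumes "mono_on {..k} a" "admissible_word k a w" "subseq v w"
  shows "admissible_word k a v"
  unfolding admissible_word_def
proof (intro conjI ballI)
  show "sorted (map snd v)"
    using assms(2) sorted_antimono_subseq[OF subseq_map[where f=snd, OF assms(3)]]
    by (simp add: admissible_word_def)
  show "inj_on snd (set v)"
    using assms set_mono_subseq by (auto simp: admissible_word_def intro: inj_on_subset)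
  fix x assume "x \<in> set v"
  then have "x \<in> set w" "0 < count_list v x"
    using set_mono_subseq[OF assms(3)] count_list_0_iff[of v x] by auto
  then show "(count_list v x, fst x) \<in> blocks k a"
    using assms(2) count_list_mono_subseq[OF assms(3), of x]
      blocks_shrink[OF assms(1), of "count_list w x" "fst x" "count_list v x"]
    by (simp add: admissible_word_def)
qed

lemma admissible_word_append:
  assumes u: "admissible_word k a u" and v: "admissible_word k a v"
    and less: "\<forall>x\<in>set u. \<forall>y\<in>set v. snd x < snd y"
  shows "admissible_word k a (u @ v)"
proof -
  have sorted: "sorted (map snd (u @ v))"
    using u v less by (auto simp: admissible_word_def sorted_append less_imp_le)
  have inj: "inj_on snd (set (u @ v))"
    unfolding set_append inj_on_Un using u v less by (fastforce simp: admissible_word_def)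
  have "(count_list (u @ v) x, fst x) \<in> blocks k a" if "x \<in> set (u @ v)" for x
  proof (cases "x \<in> set u")
    case True
    then have "x \<notin> set v" using less by fastforce
    then show ?thesis using True u by (simp add: admissible_word_def)
  next
    case False
    then show ?thesis using that v by (simp add: admissible_word_def)
  qed
  then show ?thesis using sorted inj by (simp add: admissible_word_def)
qed

lemma admissible_word_append_right:
  assumes "admissible_word k a (u @ v)" "set u \<inter> set v = {}"
  shows "admissible_word k a v"
  unfolding admissible_word_def
proof (intro conjI ballI)
  show "sorted (map snd v)" "inj_on snd (set v)"
    using assms(1) by (auto simp: admissible_word_def sorted_append intro: inj_on_subset)
  fix x assume "x \<in> set v"
  then have "x \<notin> set u" "(count_list (u @ v) x, fst x) \<in> blocks k a"
    using assms by (auto simp: admissible_word_def)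
  then show "(count_list v x, fst x) \<in> blocks k a" by simp
qed

lemma admissible_word_replicate:
  "0 < L \<Longrightarrow> (L, fst x) \<in> blocks k a \<Longrightarrow> admissible_word k a (replicate L x)"
  by (simp add: admissible_word_def count_list_eq_length_filter)

lemma induced_subgraph_word_graph:
  assumes H: "ordered_graph H" and f: "strict_mono_on {0..<fst H} f"
    and range: "f ` {0..<fst H} \<subseteq> {0..<length w}"
    and adj: "\<forall>i j. i < j \<and> j < fst H \<longrightarrow>
      ((i, j) \<in> snd H \<longleftrightarrow> (f i, f j) \<in> snd (word_graph w))"
  shows "H = word_graph (map (\<lambda>i. w ! f i) [0..<fst H])"
proof -
  obtain n E where H_eq: "H = (n, E)" by fastforce
  have "(i, j) \<in> E \<longleftrightarrow> (i, j) \<in> snd (word_graph (map (\<lambda>i. w ! f i) [0..<n]))" for i j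
  proof (cases "i < j \<and> j < n")
    case True
    then have "f i < f j" "f j < length w"
      using f range H_eq by (auto simp: strict_mono_on_def image_subset_iff)
    then show ?thesis using adj True H_eq by (auto simp: word_graph_def)
  next
    case False
    then show ?thesis using H H_eq by (auto simp: word_graph_def ordered_graph_def)
  qed
  then show ?thesis using H_eq by (auto simp: word_graph_def)
qed

lemma hereditary_admissible_graphs:
  assumes "mono_on {..k} a"
  shows "hereditary_property (admissible_graphs k a)"
  unfolding hereditary_property_def
proof (intro conjI ballI allI impI)
  fix G assume "G \<in> admissible_graphs k a"
  then show "ordered_graph G" by (auto simp: admissible_graphs_def word_graph_def ordered_graph_def)
next
  fix G H assume "G \<in> admissible_graphs k a" and H: "ordered_graph H \<and> induced_ordered_subgraph H G"
  then obtain w where G: "G = word_graph w" and w: "admissible_word k a w"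
    by (auto simp: admissible_graphs_def)
  obtain f where f: "strict_mono_on {0..<fst H} f" and range: "f ` {0..<fst H} \<subseteq> {0..<length w}"
    and adj: "\<forall>i j. i < j \<and> j < fst H \<longrightarrow>
      ((i, j) \<in> snd H \<longleftrightarrow> (f i, f j) \<in> snd (word_graph w))"
    using H G by (auto simp: induced_ordered_subgraph_def word_graph_def)
  have "H = word_graph (map (\<lambda>i. w ! f i) [0..<fst H])"
    using H f range adj by (intro induced_subgraph_word_graph) auto
  moreover have "admissible_word k a (map (\<lambda>i. w ! f i) [0..<fst H])"
    using assms w subseq_map_nth[OF f range] by (rule admissible_word_subseq)
  ultimately show "H \<in> admissible_graphs k a" by (auto simp: admissible_graphs_def)
qed

section \<open>Block words\<close>

fun block_word :: "nat \<Rightarrow> (nat \<times> nat) list \<Rightarrow> word" where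
  "block_word q [] = []"
| "block_word q ((L, s) # ps) = replicate L (s, q) @ block_word (Suc q) ps"

definition block_lists :: "nat \<Rightarrow> (nat \<Rightarrow> nat) \<Rightarrow> nat \<Rightarrow> (nat \<times> nat) list set" where
  "block_lists k a n = {ps. set ps \<subseteq> blocks k a \<and> sum_list (map fst ps) = n}"

lemma length_block_word: "length (block_word q ps) = sum_list (map fst ps)"
  by (induction q ps rule: block_word.induct) auto

lemma block_word_label_ge: "x \<in> set (block_word q ps) \<Longrightarrow> q \<le> snd x"
  by (induction q ps rule: block_word.induct) (auto dest: Suc_leD)

lemma block_word_value: "x \<in> set (block_word q ps) \<Longrightarrow> \<exists>L. (L, fst x) \<in> set ps"
  by (induction q ps rule: block_word.induct) (auto split: if_splits)

lemma admissible_block_word: "set ps \<subseteq> blocks k a \<Longrightarrow> admissible_word k a (block_word q ps)"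
proof (induction q ps rule: block_word.induct)
  case (1 q)
  then show ?case by (simp add: admissible_word_def)
next
  case (2 q L s ps)
  then have "(L, s) \<in> blocks k a" by simp
  then have "admissible_word k a (replicate L (s, q))"
    by (intro admissible_word_replicate) (auto simp: blocks_def)
  moreover have "\<forall>x\<in>set (replicate L (s, q)). \<forall>y\<in>set (block_word (Suc q) ps). snd x < snd y"
    using block_word_label_ge by fastforce
  ultimately show ?case using 2 by (simp add: admissible_word_append)
qed

definition word_equiv :: "word \<Rightarrow> word \<Rightarrow> bool" where
  "word_equiv u w \<longleftrightarrow> map fst u = map fst w \<and>
     (\<forall>i<length u. \<forall>j<length u. snd (u ! i) = snd (u ! j) \<longleftrightarrow> snd (w ! i) = snd (w ! j))"

lemma word_equiv_length: "word_equiv u w \<Longrightarrow> length u = length w"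
  unfolding word_equiv_def by (blast dest: map_eq_imp_length_eq)

lemma word_equiv_fst_nth:
  assumes "word_equiv u w" "i < length u"
  shows "fst (u ! i) = fst (w ! i)"
proof -
  have "map fst u ! i = map fst w ! i" using assms(1) by (simp add: word_equiv_def)
  then show ?thesis using assms word_equiv_length by simp
qed

lemma word_equiv_snd_nth_iff:
  "word_equiv u w \<Longrightarrow> i < length u \<Longrightarrow> j < length u \<Longrightarrow>
    snd (u ! i) = snd (u ! j) \<longleftrightarrow> snd (w ! i) = snd (w ! j)"
  unfolding word_equiv_def by blast

lemma word_equiv_word_graph:
  assumes "word_equiv u w"
  shows "word_graph u = word_graph w"
proof -
  have len: "length u = length w" using assms by (rule word_equiv_length)
  have "i < j \<and> j < length u \<and> (snd (u ! i) = snd (u ! j) \<or> fst (u ! i) < fst (u ! j)) \<longleftrightarrow>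
        i < j \<and> j < length w \<and> (snd (w ! i) = snd (w ! j) \<or> fst (w ! i) < fst (w ! j))" for i j
  proof (cases "i < j \<and> j < length u")
    case True
    then show ?thesis
      using len word_equiv_fst_nth[OF assms, of i] word_equiv_fst_nth[OF assms, of j]
        word_equiv_snd_nth_iff[OF assms, of i j] by simp
  next
    case False
    then show ?thesis using len by auto
  qed
  then show ?thesis by (simp add: word_graph_def len)
qed

lemma word_equiv_drop:
  assumes "word_equiv u w"
  shows "word_equiv (drop n u) (drop n w)"
  unfolding word_equiv_def
proof (intro conjI allI impI)
  show "map fst (drop n u) = map fst (drop n w)"
    using assms by (metis drop_map word_equiv_def)
  fix i j assume "i < length (drop n u)" "j < length (drop n u)"
  then have "n + i < length u" "n + j < length u" "n \<le> length w"
    using word_equiv_length[OF assms] by auto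
  then show "snd (drop n u ! i) = snd (drop n u ! j) \<longleftrightarrow> snd (drop n w ! i) = snd (drop n w ! j)"
    using word_equiv_snd_nth_iff[OF assms] by simp
qed

lemma snd_nth_append_eq_iff:
  assumes "snd ` set u \<inter> snd ` set v = {}" "i < length (u @ v)" "j < length (u @ v)"
  shows "snd ((u @ v) ! i) = snd ((u @ v) ! j) \<longleftrightarrow>
    (if i < length u then j < length u \<and> snd (u ! i) = snd (u ! j)
     else \<not> j < length u \<and> snd (v ! (i - length u)) = snd (v ! (j - length u)))"
proof -
  have "snd (u ! i') \<noteq> snd (v ! j')" if "i' < length u" "j' < length v" for i' j'
    using assms(1) nth_mem[OF that(1)] nth_mem[OF that(2)] by blast
  then show ?thesis
    using assms(2,3) by (auto simp: nth_append dest: sym)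
qed

lemma word_equiv_append:
  assumes "word_equiv u u'" "word_equiv v v'"
    and "snd ` set u \<inter> snd ` set v = {}" "snd ` set u' \<inter> snd ` set v' = {}"
  shows "word_equiv (u @ v) (u' @ v')"
  unfolding word_equiv_def
proof (intro conjI allI impI)
  show "map fst (u @ v) = map fst (u' @ v')"
    using assms(1,2) by (simp add: word_equiv_def)
  have len: "length u = length u'" "length v = length v'"
    using assms(1,2) word_equiv_length by auto
  fix i j assume ij: "i < length (u @ v)" "j < length (u @ v)"
  then have ij': "i < length (u' @ v')" "j < length (u' @ v')" using len by simp_all
  show "snd ((u @ v) ! i) = snd ((u @ v) ! j) \<longleftrightarrow> snd ((u' @ v') ! i) = snd ((u' @ v') ! j)"
    unfolding snd_nth_append_eq_iff[OF assms(3) ij] snd_nth_append_eq_iff[OF assms(4) ij'] len[symmetric]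
    using ij word_equiv_snd_nth_iff[OF assms(1), of i j]
      word_equiv_snd_nth_iff[OF assms(2), of "i - length u" "j - length u"] by auto
qed

lemma admissible_word_first_block:
  assumes "admissible_word k a (x # w)"
  obtains L v where "0 < L" "x # w = replicate L x @ v" "(L, fst x) \<in> blocks k a"
    and "admissible_word k a v" "\<forall>y\<in>set v. snd x < snd y"
proof -
  define t where "t = takeWhile (\<lambda>y. snd y = snd x) (x # w)"
  define v where "v = dropWhile (\<lambda>y. snd y = snd x) (x # w)"
  define L where "L = length t"
  have sorted: "sorted (map snd (x # w))" and inj: "inj_on snd (set (x # w))"
    and counts: "\<forall>y\<in>set (x # w). (count_list (x # w) y, fst y) \<in> blocks k a"
    using assms by (simp_all add: admissible_word_def)
  have "y = x" if "y \<in> set t" for y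
  proof -
    have "y \<in> set (x # w)" "snd y = snd x" using set_takeWhileD that by (fastforce simp: t_def)+
    then show ?thesis using inj_onD[OF inj] by simp
  qed
  then have t_eq: "t = replicate L x" by (simp add: L_def replicate_length_same)
  have w_eq: "x # w = replicate L x @ v" by (simp add: t_def v_def flip: t_eq)
  have "0 < L" by (simp add: L_def t_def)
  have v_labels: "\<forall>y\<in>set v. snd x < snd y"
  proof
    fix y assume y: "y \<in> set v"
    obtain h v' where v: "v = h # v'" using y by (cases v) auto
    have "snd h \<noteq> snd x" using v unfolding v_def dropWhile_eq_Cons_conv by simp
    moreover have "snd x \<le> snd h" "snd h \<le> snd y"
    proof -
      have "sorted (map snd (replicate L x) @ snd h # map snd v')"
        using sorted by (simp add: w_eq v)
      then show "snd x \<le> snd h" "snd h \<le> snd y"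
        using y \<open>0 < L\<close> v unfolding sorted_append by auto
    qed
    ultimately show "snd x < snd y" by simp
  qed
  then have "x \<notin> set v" by blast
  then have "admissible_word k a v"
    using assms w_eq \<open>0 < L\<close> admissible_word_append_right[of k a "replicate L x" v] by auto
  moreover have "(L, fst x) \<in> blocks k a"
  proof -
    have "count_list (x # w) x = count_list (replicate L x) x"
      using \<open>x \<notin> set v\<close> by (simp only: w_eq count_list_append) simp
    also have "\<dots> = L" by (simp add: count_list_eq_length_filter)
    finally show ?thesis using counts by auto
  qed
  ultimately show thesis using that \<open>0 < L\<close> w_eq v_labels by blast
qed

lemma admissible_word_equiv_block_word:
  assumes "admissible_word k a w"
  shows "\<exists>ps\<in>block_lists k a (length w). word_equiv (block_word q ps) w"
  using assms
proof (induction "length w" arbitrary: w q rule: less_induct)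
  case less
  show ?case
  proof (cases w)
    case Nil
    then show ?thesis by (intro bexI[of _ "[]"]) (auto simp: block_lists_def word_equiv_def)
  next
    case (Cons x w')
    then obtain L v where "0 < L" and w_eq: "w = replicate L x @ v"
      and block: "(L, fst x) \<in> blocks k a" and v: "admissible_word k a v"
      and v_labels: "\<forall>y\<in>set v. snd x < snd y"
      using admissible_word_first_block less.prems by metis
    then obtain ps where ps: "ps \<in> block_lists k a (length v)"
      and equiv: "word_equiv (block_word (Suc q) ps) v"
      using less.hyps[of v] by auto
    have "(L, fst x) # ps \<in> block_lists k a (length w)"
      using ps block by (simp add: block_lists_def w_eq)
    moreover have "word_equiv (block_word q ((L, fst x) # ps)) w"
    proof -
      have "word_equiv (replicate L (fst x, q)) (replicate L x)"
        by (simp add: word_equiv_def)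
      moreover have "snd ` set (replicate L (fst x, q)) \<inter> snd ` set (block_word (Suc q) ps) = {}"
        using block_word_label_ge by fastforce
      moreover have "snd ` set (replicate L x) \<inter> snd ` set v = {}"
        using v_labels by fastforce
      ultimately show ?thesis
        using equiv w_eq by (simp add: word_equiv_append)
    qed
    ultimately show ?thesis by blast
  qed
qed

lemma block_word_first_block:
  assumes "0 < L"
  shows "{i. i < length (block_word q ((L, s) # ps)) \<and> snd (block_word q ((L, s) # ps) ! i) = q} =
    {..<L}"
proof -
  have label: "q < snd (block_word (Suc q) ps ! j)" if "j < length (block_word (Suc q) ps)" for j
    using block_word_label_ge[OF nth_mem[OF that]] by simp
  have "snd (block_word q ((L, s) # ps) ! i) = q \<longleftrightarrow> i < L"
    if "i < length (block_word q ((L, s) # ps))" for i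
  proof (cases "i < L")
    case True
    then show ?thesis by (simp add: nth_append)
  next
    case False
    then have "i - L < length (block_word (Suc q) ps)" using that by simp
    then show ?thesis using False label[of "i - L"] by (simp add: nth_append)
  qed
  then show ?thesis by auto
qed

lemma block_word_inj:
  assumes "\<forall>p\<in>set ps. 0 < fst p" "\<forall>p\<in>set ps'. 0 < fst p"
    and "word_equiv (block_word q ps) (block_word q ps')"
  shows "ps = ps'"
  using assms
proof (induction ps arbitrary: ps' q)
  case Nil
  then have "sum_list (map fst ps') = 0"
    using word_equiv_length length_block_word by fastforce
  then show ?case using Nil.prems(2) by (cases ps') auto
next
  case (Cons p ps)
  obtain L s where p: "p = (L, s)" by fastforce
  have "0 < L" using Cons.prems p by auto
  then have "ps' \<noteq> []"
    using Cons.prems(3) word_equiv_length[OF Cons.prems(3)] p by auto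
  then obtain L' s' ps'' where ps': "ps' = (L', s') # ps''" by (metis list.exhaust prod.exhaust)
  have "0 < L'" using Cons.prems ps' by auto
  define u where "u = block_word q ((L, s) # ps)"
  define u' where "u' = block_word q ((L', s') # ps'')"
  have equiv: "word_equiv u u'" using Cons.prems(3) p ps' by (simp add: u_def u'_def)
  have u0: "u ! 0 = (s, q)" "u' ! 0 = (s', q)" "0 < length u"
    using \<open>0 < L\<close> \<open>0 < L'\<close> by (simp_all add: u_def u'_def nth_append)
  have "{i. i < length u \<and> snd (u ! i) = q} = {i. i < length u' \<and> snd (u' ! i) = q}"
    using word_equiv_snd_nth_iff[OF equiv _ u0(3)] word_equiv_length[OF equiv] u0 by force
  then have "L = L'"
    using block_word_first_block[OF \<open>0 < L\<close>] block_word_first_block[OF \<open>0 < L'\<close>]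
    by (simp add: u_def u'_def)
  moreover have "s = s'" using word_equiv_fst_nth[OF equiv u0(3)] u0 by simp
  moreover have "ps = ps''"
  proof -
    have "word_equiv (drop L u) (drop L u')" using equiv by (rule word_equiv_drop)
    then have "word_equiv (block_word (Suc q) ps) (block_word (Suc q) ps'')"
      using \<open>L = L'\<close> by (simp add: u_def u'_def)
    then show ?thesis using Cons.IH Cons.prems ps' by simp
  qed
  ultimately show ?case using p ps' by simp
qed

section \<open>Decoding behind a staircase\<close>

definition staircase :: "nat \<Rightarrow> word" where
  "staircase m = map (\<lambda>u. (Suc u, u)) [0..<m]"

lemma length_staircase [simp]: "length (staircase m) = m"
  by (simp add: staircase_def)

lemma admissible_staircase: "m \<le> a k \<Longrightarrow> admissible_word k a (staircase m)"
proof (induction m)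
  case 0
  then show ?case by (simp add: staircase_def admissible_word_def)
next
  case (Suc m)
  have "admissible_word k a (replicate 1 (Suc m, m))"
    using Suc.prems by (intro admissible_word_replicate) (auto simp: blocks_def)
  then show ?case
    using Suc by (auto simp: staircase_def intro!: admissible_word_append)
qed

lemma staircase_neighbours:
  assumes "i < length v" "0 < fst (v ! i)" "fst (v ! i) \<le> m" "m \<le> snd (v ! i)"
  shows "card {u. u < m \<and> (u, m + i) \<in> snd (word_graph (staircase m @ v))} = fst (v ! i) - 1"
proof -
  have "{u. u < m \<and> (u, m + i) \<in> snd (word_graph (staircase m @ v))} = {..<fst (v ! i) - 1}"
    using assms by (auto simp: word_graph_def nth_append staircase_def)
  then show ?thesis by simp
qed

lemma staircase_edge_iff:
  assumes "i < j" "j < length v"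
  shows "(m + i, m + j) \<in> snd (word_graph (staircase m @ v)) \<longleftrightarrow>
    snd (v ! i) = snd (v ! j) \<or> fst (v ! i) < fst (v ! j)"
  using assms by (simp add: word_graph_def nth_append)

lemma staircase_word_graph_determines_word:
  assumes graph: "word_graph (staircase m @ v) = word_graph (staircase m @ v')"
    and len: "length v = length v'"
    and v: "inj_on snd (set v)" "\<forall>x\<in>set v. 0 < fst x \<and> fst x \<le> m \<and> m \<le> snd x"
    and v': "inj_on snd (set v')" "\<forall>x\<in>set v'. 0 < fst x \<and> fst x \<le> m \<and> m \<le> snd x"
  shows "word_equiv v v'"
proof -
  have fst_eq: "fst (v ! i) = fst (v' ! i)" if "i < length v" for i
    using staircase_neighbours[of i v m] staircase_neighbours[of i v' m]
      v(2) v'(2) nth_mem[OF that] nth_mem[of i v'] that len graph by fastforce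
  have snd_iff: "snd (v ! i) = snd (v ! j) \<longleftrightarrow> snd (v' ! i) = snd (v' ! j)"
    if "i < j" "j < length v" for i j
  proof -
    have "snd (w ! i) = snd (w ! j) \<longleftrightarrow>
        fst (w ! i) = fst (w ! j) \<and> (m + i, m + j) \<in> snd (word_graph (staircase m @ w))"
      if "inj_on snd (set w)" "j < length w" for w
      using that \<open>i < j\<close> staircase_edge_iff[of i j w m] inj_onD[OF that(1), of "w ! i" "w ! j"]
      by (auto simp: prod_eq_iff)
    then show ?thesis
      using that v(1) v'(1) len graph fst_eq[of i] fst_eq[of j] by auto
  qed
  show ?thesis
    unfolding word_equiv_def
  proof (intro conjI allI impI)
    show "map fst v = map fst v'" using fst_eq len by (simp add: list_eq_iff_nth_eq)
    fix i j assume "i < length v" "j < length v"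
    then show "snd (v ! i) = snd (v ! j) \<longleftrightarrow> snd (v' ! i) = snd (v' ! j)"
      using snd_iff[of i j] snd_iff[of j i] by (cases i j rule: linorder_cases) auto
  qed
qed

section \<open>Counting\<close>

lemma length_le_sum_list_fst: "\<forall>p\<in>set ps. 0 < fst p \<Longrightarrow> length ps \<le> sum_list (map fst ps)"
  by (induction ps) (auto simp: Suc_le_eq)

lemma finite_block_lists: "finite (block_lists k a n)"
proof -
  have "block_lists k a n \<subseteq> {ps. set ps \<subseteq> blocks k a \<and> length ps \<le> n}"
    using length_le_sum_list_fst by (fastforce simp: block_lists_def blocks_def)
  moreover have "finite (blocks k a)" by (simp add: blocks_def)
  ultimately show ?thesis by (metis finite_lists_length_le finite_subset)
qed

lemma block_lists_0: "block_lists k a 0 = {[]}"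
proof -
  have "ps = []" if "ps \<in> block_lists k a 0" for ps
  proof (rule ccontr)
    assume "ps \<noteq> []"
    then obtain p where "p \<in> set ps" by (cases ps) auto
    then have "p \<in> blocks k a" "fst p = 0" using that by (auto simp: block_lists_def)
    then show False by (auto simp: blocks_def)
  qed
  then show ?thesis by (auto simp: block_lists_def)
qed

lemma block_lists_Cons:
  assumes "0 < n"
  shows "block_lists k a n = (\<Union>p\<in>{p \<in> blocks k a. fst p \<le> n}. (#) p ` block_lists k a (n - fst p))"
proof (intro set_eqI iffI)
  fix ps assume ps: "ps \<in> block_lists k a n"
  then obtain p ps' where ps_eq: "ps = p # ps'" using assms by (cases ps) (auto simp: block_lists_def)
  then have "p \<in> {p \<in> blocks k a. fst p \<le> n}" "ps' \<in> block_lists k a (n - fst p)"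
    using ps by (auto simp: block_lists_def)
  then show "ps \<in> (\<Union>p\<in>{p \<in> blocks k a. fst p \<le> n}. (#) p ` block_lists k a (n - fst p))"
    using ps_eq by blast
qed (auto simp: block_lists_def)

lemma card_block_lists_rec:
  assumes "0 < n"
  shows "card (block_lists k a n) = (\<Sum>L=1..min n (k + 1). a (k + 1 - L) * card (block_lists k a (n - L)))"
proof -
  have "card (block_lists k a n) = (\<Sum>p\<in>{p \<in> blocks k a. fst p \<le> n}. card ((#) p ` block_lists k a (n - fst p)))"
    unfolding block_lists_Cons[OF assms]
    by (rule card_UN_disjoint) (auto simp: finite_block_lists blocks_def)
  also have "\<dots> = (\<Sum>p\<in>{p \<in> blocks k a. fst p \<le> n}. card (block_lists k a (n - fst p)))"
    by (simp add: card_image)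
  also have "{p \<in> blocks k a. fst p \<le> n} = (SIGMA L:{1..min n (k + 1)}. {1..a (k + 1 - L)})"
    by (auto simp: blocks_def)
  also have "(\<Sum>p\<in>\<dots>. card (block_lists k a (n - fst p))) =
      (\<Sum>L=1..min n (k + 1). \<Sum>s\<in>{1..a (k + 1 - L)}. card (block_lists k a (n - L)))"
    by (subst sum.Sigma) (auto simp: case_prod_beta)
  also have "\<dots> = (\<Sum>L=1..min n (k + 1). a (k + 1 - L) * card (block_lists k a (n - L)))"
    by simp
  finally show ?thesis .
qed

lemma card_block_lists_pos:
  assumes "0 < a k"
  shows "0 < card (block_lists k a n)"
proof -
  have "replicate n (1, 1) \<in> block_lists k a n"
    using assms by (simp add: block_lists_def blocks_def sum_list_replicate set_replicate_conv_if)
  then show ?thesis using finite_block_lists card_gt_0_iff by blast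
qed

lemma card_block_lists_bounds:
  fixes c :: real
  assumes pos: "0 < a k" and c: "1 \<le> c"
    and root: "c ^ (k + 1) = (\<Sum>i\<le>k. real (a i) * c ^ i)"
  shows "real (card (block_lists k a n)) \<le> c ^ n"
    and "c ^ n \<le> c ^ k * real (card (block_lists k a n))"
proof -
  define N where "N n = real (card (block_lists k a n))" for n
  have rec: "N n = (\<Sum>L=1..min n (k + 1). real (a (k + 1 - L)) * N (n - L))" if "0 < n" for n
    using card_block_lists_rec[OF that] by (simp add: N_def)
  have char: "(\<Sum>L=1..k + 1. real (a (k + 1 - L)) * c ^ (k + 1 - L)) = c ^ (k + 1)"
    unfolding root by (rule sum.reindex_bij_witness[of _ "\<lambda>i. k + 1 - i" "\<lambda>L. k + 1 - L"]) auto
  have "N 0 \<le> 1" by (simp add: N_def block_lists_0)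
  then show "real (card (block_lists k a n)) \<le> c ^ n"
    using linear_recurrence_le_power[OF _ _ _ rec char] c unfolding N_def by simp
  have "1 \<le> N n" for n
    using card_block_lists_pos[of a k n] pos by (simp add: N_def Suc_le_eq)
  then show "c ^ n \<le> c ^ k * real (card (block_lists k a n))"
    using power_le_linear_recurrence[OF c _ _ rec char] unfolding N_def by simp
qed

lemma slice_admissible_graphs_subset:
  "slice (admissible_graphs k a) n \<subseteq> (\<lambda>ps. word_graph (block_word 0 ps)) ` block_lists k a n"
proof
  fix G assume "G \<in> slice (admissible_graphs k a) n"
  then obtain w where G: "G = word_graph w" "length w = n" and w: "admissible_word k a w"
    by (auto simp: slice_def admissible_graphs_def word_graph_def)
  obtain ps where "ps \<in> block_lists k a n" "word_equiv (block_word 0 ps) w"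
    using admissible_word_equiv_block_word[OF w, of 0] G(2) by blast
  then show "G \<in> (\<lambda>ps. word_graph (block_word 0 ps)) ` block_lists k a n"
    using G(1) word_equiv_word_graph by (metis image_eqI)
qed

lemma finite_slice_admissible_graphs: "finite (slice (admissible_graphs k a) n)"
  by (rule finite_surj[OF finite_block_lists slice_admissible_graphs_subset])

lemma card_slice_admissible_graphs_le: "card (slice (admissible_graphs k a) n) \<le> card (block_lists k a n)"
  by (rule surj_card_le[OF finite_block_lists slice_admissible_graphs_subset])

lemma card_block_lists_le_card_slice:
  assumes mono: "mono_on {..k} a"
  shows "card (block_lists k a n) \<le> card (slice (admissible_graphs k a) (a k + n))"
proof -
  define g where "g ps = word_graph (staircase (a k) @ block_word (a k) ps)" for ps
  have letters: "inj_on snd (set (block_word (a k) ps)) \<and>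
      (\<forall>x\<in>set (block_word (a k) ps). 0 < fst x \<and> fst x \<le> a k \<and> a k \<le> snd x)"
    if "ps \<in> block_lists k a n" for ps
  proof -
    have "admissible_word k a (block_word (a k) ps)"
      using that by (intro admissible_block_word) (simp add: block_lists_def)
    moreover have "0 < fst x \<and> fst x \<le> a k" if "x \<in> set (block_word (a k) ps)" for x
      using block_word_value[OF that] blocks_value_le[OF mono] \<open>ps \<in> block_lists k a n\<close>
      by (fastforce simp: block_lists_def blocks_def)
    ultimately show ?thesis using block_word_label_ge by (auto simp: admissible_word_def)
  qed
  have "inj_on g (block_lists k a n)"
  proof (rule inj_onI)
    fix ps ps' assume ps: "ps \<in> block_lists k a n" and ps': "ps' \<in> block_lists k a n" and "g ps = g ps'"
    then have "word_equiv (block_word (a k) ps) (block_word (a k) ps')"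
      using letters[OF ps] letters[OF ps']
      by (intro staircase_word_graph_determines_word) (auto simp: g_def length_block_word block_lists_def)
    then show "ps = ps'"
      using ps ps' by (intro block_word_inj) (auto simp: block_lists_def blocks_def)
  qed
  moreover have "g ` block_lists k a n \<subseteq> slice (admissible_graphs k a) (a k + n)"
  proof (rule image_subsetI)
    fix ps assume ps: "ps \<in> block_lists k a n"
    have "admissible_word k a (staircase (a k) @ block_word (a k) ps)"
      using ps block_word_label_ge
      by (intro admissible_word_append admissible_staircase admissible_block_word)
        (fastforce simp: block_lists_def staircase_def)+
    then have "g ps \<in> admissible_graphs k a" by (simp add: g_def admissible_graphs_def)
    moreover have "fst (g ps) = a k + n"
      using ps by (simp add: g_def word_graph_def length_block_word block_lists_def)
    ultimately show "g ps \<in> slice (admissible_graphs k a) (a k + n)" by (simp add: slice_def)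
  qed
  ultimately show ?thesis
    using finite_slice_admissible_graphs by (rule card_inj_on_le)
qed

lemma card_slice_admissible_graphs_bounds:
  fixes c :: real
  assumes mono: "mono_on {..k} a" and pos: "0 < a k" and c: "1 \<le> c"
    and root: "c ^ (k + 1) = (\<Sum>i\<le>k. real (a i) * c ^ i)"
    and n: "a k \<le> n"
  shows "real (card (slice (admissible_graphs k a) n)) \<le> c ^ n"
    and "c ^ n \<le> c ^ (a k + k) * real (card (slice (admissible_graphs k a) n))"
proof -
  note bounds = card_block_lists_bounds[OF pos c root]
  show "real (card (slice (admissible_graphs k a) n)) \<le> c ^ n"
    using card_slice_admissible_graphs_le[of k a n] bounds(1)[of n] by linarith
  have "c ^ n = c ^ a k * c ^ (n - a k)"
    using n by (simp flip: power_add)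
  also have "\<dots> \<le> c ^ a k * (c ^ k * real (card (block_lists k a (n - a k))))"
    using bounds(2) c by (intro mult_left_mono) auto
  also have "\<dots> \<le> c ^ a k * (c ^ k * real (card (slice (admissible_graphs k a) n)))"
    using card_block_lists_le_card_slice[OF mono, of "n - a k"] n c
    by (intro mult_left_mono) auto
  also have "\<dots> = c ^ (a k + k) * real (card (slice (admissible_graphs k a) n))"
    by (simp add: power_add)
  finally show "c ^ n \<le> c ^ (a k + k) * real (card (slice (admissible_graphs k a) n))" .
qed

theorem theorem31:
  fixes k :: nat and a :: "nat \<Rightarrow> nat" and c :: real
  assumes pos: "\<forall>i\<le>k. 0 < a i"
    and mono: "\<forall>i j. i \<le> j \<and> j \<le> k \<longrightarrow> a i \<le> a j"
    and root: "c ^ (k+1) = (\<Sum>i\<le>k. real (a i) * c ^ i)"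
    and largest: "\<forall>x::real. x ^ (k+1) = (\<Sum>i\<le>k. real (a i) * x ^ i) \<longrightarrow> x \<le> c"
  shows "\<exists>P. hereditary_property P \<and>
           (\<exists>\<epsilon>::nat \<Rightarrow> real. \<epsilon> \<longlonglongrightarrow> 0 \<and>
              (\<forall>\<^sub>F n in sequentially.
                 real (card (slice P n)) = c powr ((1 + \<epsilon> n) * real n)))"
proof -
  have mono_a: "mono_on {..k} a" using mono by (auto simp: mono_on_def)
  have "1 \<le> real (a 0)" using pos by (simp add: Suc_le_eq)
  also have "\<dots> \<le> (\<Sum>i\<le>k. real (a i))" by (rule member_le_sum) auto
  finally have "1 \<le> (\<Sum>i\<le>k. real (a i))" .
  then have c: "1 \<le> c" using largest_root_ge_1[OF _ _ largest] by simp
  have "0 < a k" using pos by simp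
  note bounds = card_slice_admissible_graphs_bounds[OF mono_a this c root]
  have "\<forall>\<^sub>F n in sequentially.
      real (card (slice (admissible_graphs k a) n)) \<le> c ^ n \<and>
      c ^ n \<le> c ^ (a k + k) * real (card (slice (admissible_graphs k a) n))"
    using eventually_ge_at_top[of "a k"] by eventually_elim (use bounds in blast)
  then have "\<exists>\<epsilon>. \<epsilon> \<longlonglongrightarrow> 0 \<and> (\<forall>\<^sub>F n in sequentially.
      real (card (slice (admissible_graphs k a) n)) = c powr ((1 + \<epsilon> n) * real n))"
    using c by (intro exponential_growth_rate) auto
  then show ?thesis using hereditary_admissible_graphs[OF mono_a] by blast
qed

end
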